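(* Let $a,b,c$ be positive integers and $r=[2a,-2,-2b,2c]$. If $bc\ge 2a(c+1)$, then all zeros of $\Delta_{K(r)}(t)$ are real (i.e. $K(r)$ is stable).
   Context: For a finite sequence $r=[2a_1,2a_2,\dots,2a_n]$ of nonzero even integers, $K(r)$ denotes the 2-bridge knot or link whose associated rational number has the even continued fraction expansion $1/(2a_1-1/(2a_2-\cdots-1/(2a_n)))$ ($K(r)$ is a knot if $n$ is even and a 2-component link if $n$ is odd). Let $M(r)$ be the $n\times n$ integer matrix whose $(k,k)$-entry is $a_k$ ($1\le k\le n$), whose $(k,k+1)$-entry is $1$ ($1\le k\le n-1$), and whose other entries are $0$; it is a Seifert matrix of $K(r)$, and $\Delta_{K(r)}(t)=\det(tM(r)-M(r)^T)$ is the (reduced) Alexander polynomial of $K(r)$ (well defined up to sign). A knot or link is called stable if all zeros of its Alexander polynomial are real. *)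

theory Defs
  imports "Jordan_Normal_Form.Determinant" "HOL-Computational_Algebra.Polynomial"
begin

text \<open>For r = [2a_1,...,2a_n] (a list of nonzero even integers), the Seifert matrix M(r):
  (k,k)-entry a_k, (k,k+1)-entry 1, all other entries 0 (0-based indices).\<close>
definition seifert_matrix :: "int list \<Rightarrow> int mat" where
  "seifert_matrix r = mat (length r) (length r)
     (\<lambda>(i,j). if i = j then (r ! i) div 2 else if j = i + 1 then 1 else 0)"

definition alexander_poly :: "int list \<Rightarrow> int poly" where
  "alexander_poly r = (let M = seifert_matrix r in
     det (mat (length r) (length r)
       (\<lambda>(i,j). monom (M $$ (i,j)) 1 - [:M $$ (j,i):])))"

definition stable :: "int list \<Rightarrow> bool" where
  "stable r \<longleftrightarrow> (\<forall>z::complex. poly (map_poly of_int (alexander_poly r)) z = 0 \<longrightarrow> z \<in> \<real>)"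

end

theory Submission
  imports Defs
begin

(*
  For r = [2a,-2,-2b,2c] the matrix tM(r) - M(r)^T is tridiagonal, and
  expanding its determinant gives, with A = abc and K = ac - bc - a,
      Delta(t) = A (t-1)^4 + K t (t-1)^2 + t^2 .
  Zero is not a root, so dividing by t^2 and putting u = (t-1)^2 / t turns
  Delta(t) = 0 into the quadratic A u^2 + K u + 1 = 0.  If A > 0, K < 0 and
  K^2 >= 4A, this quadratic has only real roots, and they are nonnegative; then
  t is a root of t^2 - (u+2) t + 1, whose discriminant (u+2)^2 - 4 is >= 0, so t is real.
*)

lemma det_2x2:
  assumes "A \<in> carrier_mat 2 2"
  shows "det A = A$$(0,0) * A$$(1,1) - A$$(0,1) * A$$(1,0)"
  using assms
  by (simp add: laplace_expansion_row[OF assms, of 0] cofactor_def mat_delete_def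
      det_single numeral_2_eq_2)

lemma det_3x3:
  fixes A :: "'a::comm_ring_1 mat"
  assumes "A \<in> carrier_mat 3 3"
  shows "det A = A$$(0,0) * (A$$(1,1) * A$$(2,2) - A$$(1,2) * A$$(2,1))
     - A$$(0,1) * (A$$(1,0) * A$$(2,2) - A$$(1,2) * A$$(2,0))
     + A$$(0,2) * (A$$(1,0) * A$$(2,1) - A$$(1,1) * A$$(2,0))"
proof -
  have "{..<3::nat} = {0,1,2}" by auto
  then have "det A = A$$(0,0) * cofactor A 0 0 + A$$(0,1) * cofactor A 0 1
                   + A$$(0,2) * cofactor A 0 2"
    by (simp add: laplace_expansion_row[OF assms, of 0])
  then show ?thesis using assms
    by (simp add: cofactor_def det_2x2 mat_delete_carrier mat_delete_def algebra_simps
        numeral_2_eq_2)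
qed

lemma alexander_poly_2a_m2_m2b_2c:
  "alexander_poly [2*a, -2, -2*b, 2*c] =
     [: a*b*c, -4*(a*b*c) + (a*c-b*c-a), 6*(a*b*c) - 2*(a*c-b*c-a) + 1,
        -4*(a*b*c) + (a*c-b*c-a), a*b*c :]"
  (is "_ = ?P")
proof -
  define M where "M = seifert_matrix [2*a, -2, -2*b, 2*c]"
  define N where "N = mat 4 4 (\<lambda>(i,j). monom (M $$ (i,j)) 1 - [:M $$ (j,i):])"
  have N: "N \<in> carrier_mat 4 4" unfolding N_def by simp
  have "alexander_poly [2*a, -2, -2*b, 2*c] = det N"
    by (simp add: alexander_poly_def N_def M_def Let_def numeral_eq_Suc)
  moreover have "poly (det N) x = poly ?P x" for x
  proof -
    have expand: "det N = (\<Sum>j<4. N $$ (0,j) * cofactor N 0 j)"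
      by (rule laplace_expansion_row[OF N]) simp
    have "{..<4::nat} = {0,1,2,3}" by auto
    moreover have "- (2 * b) div 2 = - b" by simp
    ultimately show ?thesis
      unfolding expand cofactor_def
      by (simp add: det_3x3 mat_delete_carrier[OF N] N_def M_def seifert_matrix_def mat_delete_def
          poly_monom numeral_2_eq_2 numeral_3_eq_3 algebra_simps power2_eq_square power3_eq_cube)
  qed
  then have "det N = ?P" by (intro poly_eq_poly_eq_iff[THEN iffD1] ext)
  ultimately show ?thesis by simp
qed

lemma alexander_poly_2a_m2_m2b_2c_eval:
  "poly (map_poly of_int (alexander_poly [2*a, -2, -2*b, 2*c])) (z::complex) =
     of_int (a*b*c) * (z-1)^4 + of_int (a*c-b*c-a) * z * (z-1)^2 + z^2"
  unfolding alexander_poly_2a_m2_m2b_2c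
  by (simp add: map_poly_pCons algebra_simps power2_eq_square power3_eq_cube eval_nat_numeral)

lemma monic_quadratic_root_real:
  fixes p q :: real and z :: complex
  assumes disc: "p^2 \<ge> 4*q" and root: "z^2 + of_real p * z + of_real q = 0"
  shows "z \<in> \<real>"
proof -
  define s where "s = sqrt (p^2 - 4*q)"
  have s2: "s^2 = p^2 - 4*q" unfolding s_def using disc by simp
  define r1 r2 where "r1 = (-p + s)/2" and "r2 = (-p - s)/2"
  have sum: "r1 + r2 = -p" and prod: "r1 * r2 = q"
    unfolding r1_def r2_def using s2 by (simp_all add: field_simps power2_eq_square)
  have "(z - of_real r1) * (z - of_real r2) = z^2 - of_real (r1 + r2) * z + of_real (r1*r2)"
    by (simp add: algebra_simps power2_eq_square)
  also have "\<dots> = 0" using root by (simp add: sum prod)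
  finally have "z = of_real r1 \<or> z = of_real r2" by simp
  then show ?thesis by auto
qed

lemma quadratic_roots_nonneg_real:
  fixes A K :: real and u :: complex
  assumes "A > 0" "K < 0" "K^2 \<ge> 4*A"
    and root: "of_real A * u^2 + of_real K * u + 1 = 0"
  obtains v where "u = of_real v" "v \<ge> 0"
proof -
  have "of_real A * (u^2 + of_real (K/A) * u + of_real (1/A)) = of_real A * u^2 + of_real K * u + 1"
    using \<open>A > 0\<close> by (simp add: algebra_simps)
  then have "u^2 + of_real (K/A) * u + of_real (1/A) = 0" using root \<open>A > 0\<close> by simp
  moreover have "(K/A)^2 \<ge> 4 * (1/A)"
    using assms(1,3) by (simp add: field_simps power2_eq_square)
  ultimately have "u \<in> \<real>" by (rule monic_quadratic_root_real[rotated])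
  then obtain v where v: "u = of_real v" by (auto elim: Reals_cases)
  have "of_real (A * v^2 + K * v + 1) = (0::complex)" using root v by simp
  then have "A * v^2 + K * v + 1 = 0" by (simp only: of_real_eq_0_iff)
  moreover have "A * v^2 \<ge> 0" using \<open>A > 0\<close> by simp
  ultimately have "K * v < 0" by linarith
  then have "v \<ge> 0" using \<open>K < 0\<close> by (simp add: mult_less_0_iff)
  with v show ?thesis by (rule that)
qed

lemma quartic_roots_real:
  fixes A K :: real and z :: complex
  assumes "A > 0" "K < 0" "K^2 \<ge> 4*A"
    and root: "of_real A * (z-1)^4 + of_real K * z * (z-1)^2 + z^2 = 0"
  shows "z \<in> \<real>"
proof -
  have "z \<noteq> 0" using root \<open>A > 0\<close> by auto
  define u where "u = (z-1)^2 / z"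
  have uz: "u * z = (z-1)^2" unfolding u_def using \<open>z \<noteq> 0\<close> by simp
  have "z^2 * (of_real A * u^2 + of_real K * u + 1)
      = of_real A * ((u*z)^2) + of_real K * z * (u*z) + z^2"
    by (simp add: algebra_simps power2_eq_square)
  also have "\<dots> = 0" using root by (simp add: uz power_mult[symmetric])
  finally have "of_real A * u^2 + of_real K * u + 1 = 0" using \<open>z \<noteq> 0\<close> by simp
  then obtain v where v: "u = of_real v" "v \<ge> 0"
    using quadratic_roots_nonneg_real[OF assms(1-3)] by blast
  have "z^2 + of_real (-(v+2)) * z + of_real 1 = 0"
    using uz v(1) by (simp add: algebra_simps power2_eq_square)
  moreover have "(-(v+2))^2 \<ge> 4*1" using v(2) by (simp add: power2_eq_square algebra_simps)
  ultimately show ?thesis by (intro monic_quadratic_root_real)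
qed

lemma coefficient_conditions:
  fixes a b c :: int
  assumes "a > 0" "c > 0" "b * c \<ge> 2 * a * (c + 1)"
  shows "a*c - b*c - a < 0" and "(a*c - b*c - a)^2 \<ge> 4 * (a*b*c)"
proof -
  define B where "B = b*c - a*c + a"
  have ac: "a*c > 0" using assms by simp
  have B: "B \<ge> a*c + 3*a" unfolding B_def using assms(3) by (simp add: algebra_simps)
  then show "a*c - b*c - a < 0" unfolding B_def using ac assms(1) by linarith
  have "(B - (a*c + 3*a)) * (B + a*c - a) \<ge> 0"
    using B ac assms(1) by (intro mult_nonneg_nonneg) linarith+
  moreover have "(a*c - b*c - a)^2 - 4 * (a*b*c) = (B - (a*c + 3*a)) * (B + a*c - a) + a^2*(c-1)^2"
    unfolding B_def by (simp add: algebra_simps power2_eq_square)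
  ultimately show "(a*c - b*c - a)^2 \<ge> 4 * (a*b*c)"
    by (smt (verit) zero_le_power2 mult_nonneg_nonneg)
qed

theorem proposition8p1:
  fixes a b c :: int
  assumes "a > 0" "b > 0" "c > 0"
    and "b * c \<ge> 2 * a * (c + 1)"
  shows "stable [2*a, -2, -2*b, 2*c]"
  unfolding stable_def
proof (intro allI impI)
  fix z :: complex
  assume "poly (map_poly of_int (alexander_poly [2*a, -2, -2*b, 2*c])) z = 0"
  then have root: "of_real (of_int (a*b*c)) * (z-1)^4
                   + of_real (of_int (a*c-b*c-a)) * z * (z-1)^2 + z^2 = 0"
    using alexander_poly_2a_m2_m2b_2c_eval[of a b c z] by simp
  obtain K_neg: "a*c-b*c-a < 0" and disc: "4 * (a*b*c) \<le> (a*c-b*c-a)^2"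
    using coefficient_conditions[OF assms(1,3,4)] by blast
  have "of_int (a*c-b*c-a) < (0::real)" using K_neg by (simp only: of_int_less_0_iff)
  moreover have "4 * of_int (a*b*c) \<le> (of_int (a*c-b*c-a) :: real)^2"
    using disc by (metis of_int_le_iff of_int_mult of_int_numeral of_int_power)
  moreover have "of_int (a*b*c) > (0::real)" using assms(1-3) by simp
  ultimately show "z \<in> \<real>" using root by (intro quartic_roots_real) auto
qed

end
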